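(* Let $N\ge2$, $g\ge1$, and let $A(z)=\sum_{k=0}^{g-1}z^kA^{(k)}$ with $A^{(k)}\in M_N(\mathbb{C})$, $A^{(g-1)}\neq0$, be a polynomial loop of genus $g$, i.e. $A(z)$ is unitary for every $z\in\mathbb{T}=\{z\in\mathbb{C}:|z|=1\}$. Extend $A$ to all $z\in\mathbb{C}$ by the same polynomial formula. Then for all $z\in\mathbb{C}$, $$\bigl(\min(1,|z|^2)\bigr)^{g-1}\,\mathbb{1}_N\;\le\;A(z)^*A(z)\;\le\;\bigl(\max(1,|z|^2)\bigr)^{g-1}\,\mathbb{1}_N,$$ in the order of positive operators on $\mathbb{C}^N$, where $\mathbb{1}_N$ is the identity matrix. *)

theory Defs
  imports "HOL-Analysis.Analysis"
begin

definition cadj :: "complex^'n^'n \<Rightarrow> complex^'n^'n" where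
  "cadj M = (\<chi> i j. cnj (M $ j $ i))"

definition unitary_mat :: "complex^'n^'n \<Rightarrow> bool" where
  "unitary_mat U \<longleftrightarrow> cadj U ** U = mat 1 \<and> U ** cadj U = mat 1"

definition qform :: "complex^'n^'n \<Rightarrow> complex^'n \<Rightarrow> complex" where
  "qform M v = (\<Sum>i\<in>UNIV. cnj (v $ i) * ((M *v v) $ i))"

definition positive_op :: "complex^'n^'n \<Rightarrow> bool" where
  "positive_op M \<longleftrightarrow> (\<forall>v. Im (qform M v) = 0 \<and> Re (qform M v) \<ge> 0)"

definition loewner_le :: "complex^'n^'n \<Rightarrow> complex^'n^'n \<Rightarrow> bool" where
  "loewner_le B C \<longleftrightarrow> positive_op (C - B)"

definition mpoly_eval :: "(nat \<Rightarrow> complex^'n^'n) \<Rightarrow> nat \<Rightarrow> complex \<Rightarrow> complex^'n^'n" where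
  "mpoly_eval Ak g z = (\<Sum>k<g. (\<chi> i j. z ^ k * (Ak k $ i $ j)))"

end

theory Submission
  imports Defs "HOL-Complex_Analysis.Conformal_Mappings" "HOL-Computational_Algebra.Polynomial"
begin

(*
  For fixed u and x = A(z) u, the function
  w \<mapsto> <x, A(w) u> is a scalar polynomial of degree < g bounded by |x| |u| on the circle;
  the maximum modulus principle, applied to it inside the disc and to its reflection
  w^(g-1) p(1/w) outside, gives |A(z) u| \<le> max(1,|z|)^(g-1) |u|.
  For the lower bound, the reflected adjoint B(w) = \<Sum>k w^k (A^(g-1-k))* equals
  w^(g-1) A(w)* on the circle, so B(z) A(z) = z^(g-1) for all z because both sides are
  polynomial. B is isometric on the circle as well, and the upper bound for B yields
  |z|^(g-1) |u| \<le> max(1,|z|)^(g-1) |A(z) u|.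
*)

definition cinner :: "complex^'n \<Rightarrow> complex^'n \<Rightarrow> complex" where
  "cinner x y = (\<Sum>i\<in>UNIV. cnj (x $ i) * y $ i)"

lemma power2_norm_vec: "(norm (x::complex^'n))\<^sup>2 = (\<Sum>i\<in>UNIV. (cmod (x $ i))\<^sup>2)"
  unfolding norm_vec_def L2_set_def by (simp add: sum_nonneg)

lemma cinner_self: "cinner x x = of_real ((norm x)\<^sup>2)"
  unfolding cinner_def power2_norm_vec of_real_sum
proof (rule sum.cong)
  show "cnj (x $ i) * x $ i = of_real ((cmod (x $ i))\<^sup>2)" for i
    by (subst complex_norm_square) (simp add: mult.commute)
qed simp

lemma norm_cinner_le: "cmod (cinner x y) \<le> norm x * norm y"
proof -
  have "cmod (cinner x y) \<le> (\<Sum>i\<in>UNIV. cmod (cnj (x $ i) * y $ i))"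
    unfolding cinner_def by (rule norm_sum)
  also have "\<dots> = (\<Sum>i\<in>UNIV. \<bar>cmod (x $ i)\<bar> * \<bar>cmod (y $ i)\<bar>)"
    by (simp add: norm_mult)
  also have "\<dots> \<le> L2_set (\<lambda>i. cmod (x $ i)) UNIV * L2_set (\<lambda>i. cmod (y $ i)) UNIV"
    by (rule L2_set_mult_ineq)
  finally show ?thesis by (simp add: norm_vec_def)
qed

lemma cinner_sum_right: "cinner x (\<Sum>k\<in>A. f k) = (\<Sum>k\<in>A. cinner x (f k))"
  unfolding cinner_def
  by (induction A rule: infinite_finite_induct) (simp_all add: sum.distrib algebra_simps)

lemma cinner_smult_right: "cinner x (c *s y) = c * cinner x y"
  unfolding cinner_def by (simp add: sum_distrib_left algebra_simps)

lemma cinner_cadj_right: "cinner v (cadj M *v y) = cinner (M *v v) y"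
  unfolding cinner_def cadj_def matrix_vector_mult_def
  by (simp add: sum_distrib_left sum_distrib_right ac_simps) (rule sum.swap)

lemma norm_smult_vec: "norm (c *s (x::complex^'n)) = cmod c * norm x"
proof -
  have "norm (c *s x) = L2_set (\<lambda>i. cmod c * cmod (x $ i)) UNIV"
    by (simp add: norm_vec_def norm_mult)
  also have "\<dots> = cmod c * L2_set (\<lambda>i. cmod (x $ i)) UNIV"
    by (rule L2_set_right_distrib[symmetric]) simp
  finally show ?thesis by (simp add: norm_vec_def)
qed

lemma matrix_vector_mult_mat: "mat c *v v = c *s v"
  by (simp add: vec_eq_iff matrix_vector_mult_def mat_def if_distrib if_distribR cong del: if_weak_cong)

lemma matrix_mult_mat_left: "mat c ** M = (\<chi> i j. c * M $ i $ j)"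
  by (simp add: vec_eq_iff matrix_matrix_mult_def mat_def if_distrib if_distribR cong del: if_weak_cong)

lemma qform_eq_cinner: "qform M v = cinner v (M *v v)"
  unfolding qform_def cinner_def by simp

lemma qform_cadj_mult: "qform (cadj M ** M) v = of_real ((norm (M *v v))\<^sup>2)"
  by (simp add: qform_eq_cinner matrix_vector_mul_assoc[symmetric] cinner_cadj_right cinner_self)

lemma qform_mat: "qform (mat c) v = c * of_real ((norm v)\<^sup>2)"
  by (simp add: qform_eq_cinner matrix_vector_mult_mat cinner_smult_right cinner_self)

lemma qform_diff: "qform (M - N) v = qform M v - qform N v"
  unfolding qform_def
  by (simp add: matrix_vector_mult_def sum_subtractf algebra_simps sum.distrib[symmetric])

lemma loewner_le_mat_cadj_mult_iff:
  "loewner_le (mat (of_real a)) (cadj M ** M) \<longleftrightarrow> (\<forall>v. a * (norm v)\<^sup>2 \<le> (norm (M *v v))\<^sup>2)"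
  unfolding loewner_le_def positive_op_def qform_diff qform_cadj_mult qform_mat by simp

lemma loewner_le_cadj_mult_mat_iff:
  "loewner_le (cadj M ** M) (mat (of_real a)) \<longleftrightarrow> (\<forall>v. (norm (M *v v))\<^sup>2 \<le> a * (norm v)\<^sup>2)"
  unfolding loewner_le_def positive_op_def qform_diff qform_cadj_mult qform_mat by simp

lemma cadj_cadj [simp]: "cadj (cadj M) = M"
  by (simp add: cadj_def vec_eq_iff)

lemma unitary_mat_cadj: "unitary_mat U \<Longrightarrow> unitary_mat (cadj U)"
  by (simp add: unitary_mat_def)

lemma unitary_mat_norm_mult_vec:
  assumes "unitary_mat U"
  shows "norm (U *v v) = norm v"
proof -
  have "complex_of_real ((norm (U *v v))\<^sup>2) = complex_of_real ((norm v)\<^sup>2)"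
    using assms qform_cadj_mult[of U v] qform_mat[of 1 v] by (simp add: unitary_mat_def)
  then have "(norm (U *v v))\<^sup>2 = (norm v)\<^sup>2"
    by (simp only: of_real_eq_iff)
  then show ?thesis
    by (simp add: power2_eq_iff_nonneg)
qed

lemma inverse_cnj_eq_self: "cmod w = 1 \<Longrightarrow> inverse (cnj w) = w"
  by (metis complex_norm_square inverse_unique mult.commute of_real_1 power_one)

lemma infinite_unit_circle: "infinite {w::complex. cmod w = 1}"
proof
  assume "finite {w::complex. cmod w = 1}"
  moreover have "connected {w::complex. cmod w = 1}"
    using connected_sphere[of "0::complex" 1] by (simp add: sphere_def)
  ultimately have "{w::complex. cmod w = 1} = {} \<or> (\<exists>a. {w::complex. cmod w = 1} = {a})"
    by (simp add: connected_finite_iff_sing)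
  moreover have "1 \<in> {w::complex. cmod w = 1}" "-1 \<in> {w::complex. cmod w = 1}"
    by simp_all
  ultimately show False
    by (metis empty_iff singletonD one_neq_neg_one)
qed

lemma poly_eq_0_if_zero_on_unit_circle:
  fixes p :: "complex poly"
  assumes "\<And>w. cmod w = 1 \<Longrightarrow> poly p w = 0"
  shows "p = 0"
proof (rule ccontr)
  assume "p \<noteq> 0"
  then have "finite {w. poly p w = 0}"
    by (rule poly_roots_finite)
  moreover have "{w. cmod w = 1} \<subseteq> {w. poly p w = 0}"
    using assms by blast
  ultimately show False
    using infinite_unit_circle finite_subset by blast
qed

lemma polyfun_reflect:
  fixes c :: "nat \<Rightarrow> 'a::field"
  assumes "w \<noteq> 0"
  shows "(\<Sum>k<g. c (g - 1 - k) * w ^ k) = w ^ (g - 1) * (\<Sum>k<g. c k * inverse w ^ k)"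
proof -
  have "w ^ (g - 1) * (\<Sum>k<g. c k * inverse w ^ k) = (\<Sum>k<g. c k * w ^ (g - 1 - k))"
    unfolding sum_distrib_left
  proof (rule sum.cong)
    fix k assume "k \<in> {..<g}"
    then have "w ^ (g - 1) = w ^ k * w ^ (g - 1 - k)"
      by (simp flip: power_add)
    then show "w ^ (g - 1) * (c k * inverse w ^ k) = c k * w ^ (g - 1 - k)"
      using assms by (simp add: power_inverse field_simps)
  qed simp
  also have "\<dots> = (\<Sum>k<g. c (g - Suc k) * w ^ (g - 1 - (g - Suc k)))"
    by (rule sum.nat_diff_reindex[symmetric])
  also have "\<dots> = (\<Sum>k<g. c (g - 1 - k) * w ^ k)"
    by (rule sum.cong) auto
  finally show ?thesis by simp
qed

lemma norm_polyfun_le_in_unit_disc: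
  fixes c :: "nat \<Rightarrow> complex"
  assumes "\<And>w. cmod w = 1 \<Longrightarrow> cmod (\<Sum>k<n. c k * w ^ k) \<le> B" and "cmod z \<le> 1"
  shows "cmod (\<Sum>k<n. c k * z ^ k) \<le> B"
proof (rule maximum_modulus_frontier[where f = "\<lambda>w. \<Sum>k<n. c k * w ^ k" and S = "cball 0 1"])
  show "(\<lambda>w. \<Sum>k<n. c k * w ^ k) holomorphic_on interior (cball 0 1)"
    by (intro holomorphic_intros)
  show "continuous_on (closure (cball 0 1)) (\<lambda>w. \<Sum>k<n. c k * w ^ k)"
    by (intro continuous_intros)
qed (use assms in auto)

lemma norm_polyfun_le_max_power:
  fixes c :: "nat \<Rightarrow> complex"
  assumes circle: "\<And>w. cmod w = 1 \<Longrightarrow> cmod (\<Sum>k<g. c k * w ^ k) \<le> B"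
  shows "cmod (\<Sum>k<g. c k * z ^ k) \<le> B * max 1 (cmod z) ^ (g - 1)"
proof (cases "cmod z \<le> 1")
  case True
  then show ?thesis
    using norm_polyfun_le_in_unit_disc[OF circle True] by simp
next
  case False
  then have "z \<noteq> 0"
    by auto
  have reflected_circle: "cmod (\<Sum>k<g. c (g - 1 - k) * w ^ k) \<le> B" if "cmod w = 1" for w
  proof -
    have "w \<noteq> 0"
      using that by auto
    then have "cmod (\<Sum>k<g. c (g - 1 - k) * w ^ k) = cmod (\<Sum>k<g. c k * inverse w ^ k)"
      using that unfolding polyfun_reflect[OF \<open>w \<noteq> 0\<close>] by (simp add: norm_mult norm_power)
    also have "\<dots> \<le> B"
      using circle[of "inverse w"] that by (simp add: norm_inverse)
    finally show ?thesis .
  qed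
  have "inverse z \<noteq> 0"
    using \<open>z \<noteq> 0\<close> by simp
  have "cmod (\<Sum>k<g. c k * z ^ k)
      = cmod z ^ (g - 1) * cmod (\<Sum>k<g. c (g - 1 - k) * inverse z ^ k)"
    using \<open>z \<noteq> 0\<close> unfolding polyfun_reflect[OF \<open>inverse z \<noteq> 0\<close>]
    by (simp add: norm_divide norm_power field_simps)
  also have "\<dots> \<le> cmod z ^ (g - 1) * B"
    using False by (intro mult_left_mono norm_polyfun_le_in_unit_disc[OF reflected_circle])
      (simp_all add: norm_inverse inverse_le_1_iff)
  finally show ?thesis
    using False by (simp add: mult.commute)
qed

lemma mpoly_eval_nth: "mpoly_eval B g w $ i $ j = (\<Sum>k<g. w ^ k * B k $ i $ j)"
  by (simp add: mpoly_eval_def)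

lemma mpoly_eval_mult_vec: "mpoly_eval B g w *v u = (\<Sum>k<g. w ^ k *s (B k *v u))"
  by (simp add: vec_eq_iff matrix_vector_mult_def mpoly_eval_nth sum_distrib_left
      sum_distrib_right mult.assoc) (intro allI sum.swap)

lemma norm_mpoly_mult_vec_le:
  assumes "\<And>w u. cmod w = 1 \<Longrightarrow> norm (mpoly_eval B g w *v u) \<le> norm u"
  shows "norm (mpoly_eval B g z *v u) \<le> max 1 (cmod z) ^ (g - 1) * norm u"
proof -
  define x where "x = mpoly_eval B g z *v u"
  define c where "c k = cinner x (B k *v u)" for k
  have cinner_eq: "cinner x (mpoly_eval B g w *v u) = (\<Sum>k<g. c k * w ^ k)" for w
    by (simp add: mpoly_eval_mult_vec cinner_sum_right cinner_smult_right c_def mult.commute)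
  have "cmod (\<Sum>k<g. c k * w ^ k) \<le> norm x * norm u" if "cmod w = 1" for w
    unfolding cinner_eq[symmetric]
    using norm_cinner_le[of x] assms[OF that, of u] by (meson norm_ge_zero order_trans mult_left_mono)
  then have "cmod (\<Sum>k<g. c k * z ^ k) \<le> norm x * norm u * max 1 (cmod z) ^ (g - 1)"
    by (rule norm_polyfun_le_max_power)
  moreover have "(\<Sum>k<g. c k * z ^ k) = of_real ((norm x)\<^sup>2)"
    using cinner_eq[of z] by (simp add: x_def cinner_self)
  ultimately have "norm x * norm x \<le> norm x * (max 1 (cmod z) ^ (g - 1) * norm u)"
    by (simp add: power2_eq_square norm_mult mult_ac)
  then show ?thesis
    by (cases "norm x = 0") (simp_all add: x_def)
qed

definition mpoly_entry_poly :: "(nat \<Rightarrow> complex^'n^'n) \<Rightarrow> nat \<Rightarrow> 'n \<Rightarrow> 'n \<Rightarrow> complex poly" where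
  "mpoly_entry_poly B g i j = (\<Sum>k<g. monom (B k $ i $ j) k)"

lemma poly_mpoly_entry_poly: "poly (mpoly_entry_poly B g i j) w = mpoly_eval B g w $ i $ j"
  by (simp add: mpoly_entry_poly_def poly_sum poly_monom mpoly_eval_nth mult.commute)

lemma mpoly_mult_eq_mat_power_if_on_unit_circle:
  assumes "\<And>w. cmod w = 1 \<Longrightarrow> mpoly_eval B h w ** mpoly_eval A g w = mat (w ^ m)"
  shows "mpoly_eval B h z ** mpoly_eval A g z = mat (z ^ m)"
proof -
  have "(mpoly_eval B h z ** mpoly_eval A g z) $ i $ j = mat (z ^ m) $ i $ j" for i j
  proof -
    define p where "p = (\<Sum>l\<in>UNIV. mpoly_entry_poly B h i l * mpoly_entry_poly A g l j)
      - (if i = j then monom 1 m else 0)"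
    have poly_p: "poly p w = (mpoly_eval B h w ** mpoly_eval A g w) $ i $ j - mat (w ^ m) $ i $ j" for w
      by (simp add: p_def poly_sum poly_mpoly_entry_poly matrix_matrix_mult_def poly_monom mat_def)
    have "p = 0"
      by (rule poly_eq_0_if_zero_on_unit_circle) (simp add: poly_p assms)
    then show ?thesis
      using poly_p[of z] by simp
  qed
  then show ?thesis
    by (simp add: vec_eq_iff)
qed

definition reflected_adjoint :: "(nat \<Rightarrow> complex^'n^'n) \<Rightarrow> nat \<Rightarrow> nat \<Rightarrow> complex^'n^'n" where
  "reflected_adjoint A g k = cadj (A (g - 1 - k))"

lemma mpoly_eval_reflected_adjoint:
  assumes "w \<noteq> 0"
  shows "mpoly_eval (reflected_adjoint A g) g w
    = mat (w ^ (g - 1)) ** cadj (mpoly_eval A g (inverse (cnj w)))"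
proof -
  have "mpoly_eval (reflected_adjoint A g) g w $ i $ j
      = (mat (w ^ (g - 1)) ** cadj (mpoly_eval A g (inverse (cnj w)))) $ i $ j" for i j
  proof -
    have "mpoly_eval (reflected_adjoint A g) g w $ i $ j
        = (\<Sum>k<g. (\<lambda>k. cnj (A k $ j $ i)) (g - 1 - k) * w ^ k)"
      by (simp add: mpoly_eval_nth reflected_adjoint_def cadj_def mult.commute)
    also have "\<dots> = w ^ (g - 1) * (\<Sum>k<g. cnj (A k $ j $ i) * inverse w ^ k)"
      by (rule polyfun_reflect[OF assms])
    also have "\<dots> = (mat (w ^ (g - 1)) ** cadj (mpoly_eval A g (inverse (cnj w)))) $ i $ j"
      by (simp add: matrix_mult_mat_left cadj_def mpoly_eval_nth mult.commute)
    finally show ?thesis .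
  qed
  then show ?thesis
    by (simp add: vec_eq_iff)
qed

lemma reflected_adjoint_mult_unitary_loop:
  assumes "\<And>w. cmod w = 1 \<Longrightarrow> unitary_mat (mpoly_eval A g w)"
  shows "mpoly_eval (reflected_adjoint A g) g z ** mpoly_eval A g z = mat (z ^ (g - 1))"
proof (rule mpoly_mult_eq_mat_power_if_on_unit_circle)
  fix w :: complex
  assume "cmod w = 1"
  then have "w \<noteq> 0"
    by auto
  with \<open>cmod w = 1\<close> assms
  show "mpoly_eval (reflected_adjoint A g) g w ** mpoly_eval A g w = mat (w ^ (g - 1))"
    by (simp add: mpoly_eval_reflected_adjoint inverse_cnj_eq_self unitary_mat_def
        flip: matrix_mul_assoc)
qed

lemma norm_reflected_adjoint_mult_vec:
  assumes "cmod w = 1" and "unitary_mat (mpoly_eval A g w)"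
  shows "norm (mpoly_eval (reflected_adjoint A g) g w *v u) = norm u"
proof -
  have "w \<noteq> 0"
    using assms(1) by auto
  then show ?thesis
    using assms unitary_mat_norm_mult_vec[OF unitary_mat_cadj[OF assms(2)]]
    by (simp add: mpoly_eval_reflected_adjoint inverse_cnj_eq_self matrix_vector_mult_mat
        norm_smult_vec norm_power flip: matrix_vector_mul_assoc)
qed

lemma unitary_loop_norm_mult_vec_le:
  assumes "\<And>w. cmod w = 1 \<Longrightarrow> unitary_mat (mpoly_eval A g w)"
  shows "norm (mpoly_eval A g z *v v) \<le> max 1 (cmod z) ^ (g - 1) * norm v"
  by (rule norm_mpoly_mult_vec_le) (simp add: assms unitary_mat_norm_mult_vec)

lemma unitary_loop_norm_mult_vec_ge:
  assumes "\<And>w. cmod w = 1 \<Longrightarrow> unitary_mat (mpoly_eval A g w)"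
  shows "min 1 (cmod z) ^ (g - 1) * norm v \<le> norm (mpoly_eval A g z *v v)"
proof -
  let ?B = "mpoly_eval (reflected_adjoint A g) g"
  have "min 1 (cmod z) ^ (g - 1) * norm v * max 1 (cmod z) ^ (g - 1) = cmod z ^ (g - 1) * norm v"
    by (cases "cmod z \<le> 1") (simp_all add: min_def max_def)
  also have "\<dots> = norm (?B z *v (mpoly_eval A g z *v v))"
    by (simp add: matrix_vector_mul_assoc reflected_adjoint_mult_unitary_loop[OF assms]
        matrix_vector_mult_mat norm_smult_vec norm_power)
  also have "\<dots> \<le> max 1 (cmod z) ^ (g - 1) * norm (mpoly_eval A g z *v v)"
    by (rule norm_mpoly_mult_vec_le) (simp add: assms norm_reflected_adjoint_mult_vec)
  finally show ?thesis
    by (simp add: mult.commute)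
qed

lemma min_one_power:
  fixes t :: "'a::linordered_semidom"
  shows "0 \<le> t \<Longrightarrow> min 1 (t ^ n) = min 1 t ^ n"
  by (cases "t \<le> 1") (auto simp: min_def power_le_one one_le_power intro: order.antisym)

lemma max_one_power:
  fixes t :: "'a::linordered_semidom"
  shows "0 \<le> t \<Longrightarrow> max 1 (t ^ n) = max 1 t ^ n"
  by (cases "t \<le> 1") (auto simp: max_def power_le_one one_le_power intro: order.antisym)

theorem corollary5p3:
  fixes Ak :: "nat \<Rightarrow> complex^'n^'n" and g :: nat and z :: complex
  assumes "CARD('n) \<ge> 2"
    and "g \<ge> 1"
    and "Ak (g - 1) \<noteq> 0"
    and "\<And>w. cmod w = 1 \<Longrightarrow> unitary_mat (mpoly_eval Ak g w)"
  shows "loewner_le (mat (complex_of_real ((min 1 ((cmod z)\<^sup>2)) ^ (g - 1))))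
                    (cadj (mpoly_eval Ak g z) ** mpoly_eval Ak g z)
       \<and> loewner_le (cadj (mpoly_eval Ak g z) ** mpoly_eval Ak g z)
                    (mat (complex_of_real ((max 1 ((cmod z)\<^sup>2)) ^ (g - 1))))"
proof -
  let ?A = "mpoly_eval Ak g z"
  have lower: "min 1 ((cmod z)\<^sup>2) ^ (g - 1) * (norm v)\<^sup>2 \<le> (norm (?A *v v))\<^sup>2" for v
  proof -
    have "min 1 ((cmod z)\<^sup>2) ^ (g - 1) * (norm v)\<^sup>2 = (min 1 (cmod z) ^ (g - 1) * norm v)\<^sup>2"
      by (simp add: min_one_power power_mult_distrib mult.commute flip: power_mult)
    also have "\<dots> \<le> (norm (?A *v v))\<^sup>2"
      using unitary_loop_norm_mult_vec_ge[OF assms(4)] by (intro power_mono) simp_all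
    finally show ?thesis .
  qed
  have upper: "(norm (?A *v v))\<^sup>2 \<le> max 1 ((cmod z)\<^sup>2) ^ (g - 1) * (norm v)\<^sup>2" for v
  proof -
    have "(norm (?A *v v))\<^sup>2 \<le> (max 1 (cmod z) ^ (g - 1) * norm v)\<^sup>2"
      using unitary_loop_norm_mult_vec_le[OF assms(4)] by (intro power_mono) simp_all
    also have "\<dots> = max 1 ((cmod z)\<^sup>2) ^ (g - 1) * (norm v)\<^sup>2"
      by (simp add: max_one_power power_mult_distrib mult.commute flip: power_mult)
    finally show ?thesis .
  qed
  show ?thesis
    unfolding loewner_le_mat_cadj_mult_iff loewner_le_cadj_mult_mat_iff
    using lower upper by blast
qed

end
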